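(* Let $\mathcal{X}=\{X\in\mathbb{S}^n_+:\operatorname{rank}(X)\le k,\ \|X\|_2\le1\}$. Then (i) $\operatorname{clconv}(\mathcal{X})=\operatorname{conv}(\mathcal{X})=\{X\in\mathbb{S}^n_+:\operatorname{tr}(X)\le k,\ \|X\|_2\le1\}$; and (ii) every face $F$ of $\operatorname{clconv}(\mathcal{X})$ of dimension at most one satisfies $F\subseteq\mathcal{X}$.
   Context: $\mathbb{S}^n_+$ is the cone of $n\times n$ positive semidefinite matrices, $k\le n$ is a positive integer, and $\|X\|_2$ is the spectral norm (largest singular value). A face of a closed convex set $D$ is a convex $F\subseteq D$ such that any segment $[a,b]\subseteq D$ with $(a,b)\cap F\neq\emptyset$ lies in $F$; its dimension is that of its affine hull. *)

theory Defs
  imports "HOL-Analysis.Analysis"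
begin

definition psd :: "real^'n^'n \<Rightarrow> bool" where
  "psd X \<longleftrightarrow> transpose X = X \<and> (\<forall>x. 0 \<le> x \<bullet> (X *v x))"

definition spec_norm :: "real^'n^'n \<Rightarrow> real" where
  "spec_norm X = onorm (\<lambda>x. X *v x)"

definition rank_set :: "nat \<Rightarrow> (real^'n^'n) set" where
  "rank_set k = {X. psd X \<and> rank X \<le> k \<and> spec_norm X \<le> 1}"

end

theory Submission
  imports Defs
begin

text \<open>Let \<open>C\<close> be the set of symmetric matrices with \<open>0 \<preceq> X \<preceq> I\<close> and trace at most \<open>k\<close>;
  it is convex and compact. In an orthonormal eigenbasis the eigenvalues of a member of
  \<open>rank_set k\<close> lie in \<open>[0, 1]\<close>, so its trace is at most its rank and \<open>rank_set k \<subseteq> C\<close>.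
  Conversely, if \<open>Z \<in> C\<close> has rank greater than \<open>k\<close>, more than \<open>k\<close> eigenvalues are nonzero
  but they sum to at most \<open>k\<close>, so two of them, with eigenvectors \<open>b\<^sub>1\<close>, \<open>b\<^sub>2\<close>, lie strictly
  between \<open>0\<close> and \<open>1\<close>. Then \<open>Z\<close> can be moved inside \<open>C\<close> in the two independent directions
  \<open>b\<^sub>1b\<^sub>1\<^sup>T - b\<^sub>2b\<^sub>2\<^sup>T\<close> and \<open>b\<^sub>1b\<^sub>2\<^sup>T + b\<^sub>2b\<^sub>1\<^sup>T\<close>, so it lies on no face of \<open>C\<close> of dimension at most one.
  In particular all extreme points of \<open>C\<close> lie in \<open>rank_set k\<close>, and Krein-Milman gives
  \<open>conv (rank_set k) = C\<close>, which is closed.\<close>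

section \<open>Spectral theorem for self-adjoint maps\<close>

lemma quadratic_nonpos_imp_linear_coeff_zero:
  fixes a c :: real
  assumes "\<And>t. 2*t*a + t^2*c \<le> 0"
  shows "a = 0"
proof -
  define s where "s = 1 / (\<bar>c\<bar> + 1)"
  have s: "0 < s" "s * \<bar>c\<bar> < 1" by (auto simp: s_def field_simps)
  have "s * (a^2 * (2 + s * c)) = 2*(s*a)*a + (s*a)^2*c"
    by (simp add: power2_eq_square algebra_simps)
  also have "\<dots> \<le> 0" by (rule assms)
  finally have "a^2 * (2 + s * c) \<le> 0"
    using s(1) by (simp add: mult_le_0_iff)
  moreover have "0 < 2 + s * c"
    using s(2) abs_le_iff[of c] mult_left_mono[of "-c" "\<bar>c\<bar>" s] s(1) by linarith
  ultimately show ?thesis by (simp add: mult_le_0_iff)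
qed

lemma quadratic_form_max_on_subspace:
  fixes f :: "'a::euclidean_space \<Rightarrow> 'a"
  assumes lin: "linear f" and S: "subspace S" and x: "x \<in> S" "x \<noteq> 0"
  obtains u where "u \<in> S" "norm u = 1" "\<And>z. z \<in> S \<Longrightarrow> z \<bullet> f z \<le> (u \<bullet> f u) * (z \<bullet> z)"
proof -
  let ?K = "S \<inter> sphere 0 1"
  have "compact ?K" using S by (simp add: closed_subspace closed_Int_compact)
  moreover have "x /\<^sub>R norm x \<in> ?K" using x S by (simp add: subspace_scale)
  hence "?K \<noteq> {}" by blast
  moreover have "continuous_on ?K (\<lambda>y. y \<bullet> f y)"
    using lin by (intro continuous_intros linear_continuous_on) (simp add: linear_conv_bounded_linear)
  ultimately obtain u where "u \<in> ?K" and umax: "\<And>y. y \<in> ?K \<Longrightarrow> y \<bullet> f y \<le> u \<bullet> f u"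
    using continuous_attains_sup[of ?K "\<lambda>y. y \<bullet> f y"] by blast
  moreover have "z \<bullet> f z \<le> (u \<bullet> f u) * (z \<bullet> z)" if "z \<in> S" for z
  proof (cases "z = 0")
    case False
    have "z /\<^sub>R norm z \<in> ?K" using False that S by (simp add: subspace_scale)
    hence "(z /\<^sub>R norm z) \<bullet> f (z /\<^sub>R norm z) \<le> u \<bullet> f u" by (rule umax)
    hence "(z \<bullet> f z) / (norm z)^2 \<le> u \<bullet> f u"
      by (simp add: linear_scale[OF lin] power2_eq_square divide_inverse mult.commute mult.left_commute)
    thus ?thesis using False by (simp add: divide_le_eq power2_norm_eq_inner mult.commute)
  qed (simp add: linear_0[OF lin])
  ultimately show thesis using that by auto
qed

text \<open>A maximiser \<open>u\<close> of the Rayleigh quotient is an eigenvector: expanding the quotient at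
  \<open>u + t v\<close> with \<open>v = f u - l u\<close> gives a quadratic inequality in \<open>t\<close> that forces \<open>v = 0\<close>.\<close>

lemma self_adjoint_unit_eigenvector_in_subspace:
  fixes f :: "'a::euclidean_space \<Rightarrow> 'a"
  assumes lin: "linear f" and adj: "\<And>x y. x \<bullet> f y = f x \<bullet> y"
    and S: "subspace S" "f ` S \<subseteq> S" and x: "x \<in> S" "x \<noteq> 0"
  shows "\<exists>u\<in>S. norm u = 1 \<and> f u = (u \<bullet> f u) *\<^sub>R u"
proof -
  obtain u where u: "u \<in> S" "norm u = 1" and rayleigh: "\<And>z. z \<in> S \<Longrightarrow> z \<bullet> f z \<le> (u \<bullet> f u) * (z \<bullet> z)"
    using quadratic_form_max_on_subspace[OF lin S(1) x] by blast
  define l where "l = u \<bullet> f u"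
  define v where "v = f u - l *\<^sub>R u"
  have vS: "v \<in> S" unfolding v_def using u S by (auto simp: subspace_diff subspace_scale)
  have "2*t*(v \<bullet> v) + t^2 * (v \<bullet> f v - l * (v \<bullet> v)) \<le> 0" for t
  proof -
    have "u + t *\<^sub>R v \<in> S" using u vS S by (simp add: subspace_add subspace_scale)
    from rayleigh[OF this, folded l_def]
    have "l + 2*t*(v \<bullet> f u) + t^2 * (v \<bullet> f v) \<le> l * (1 + 2*t*(v \<bullet> u) + t^2*(v \<bullet> v))"
      using adj[of u v] u(2)
      by (simp add: linear_add[OF lin] linear_scale[OF lin] inner_add_left inner_add_right
          l_def power2_eq_square algebra_simps inner_commute norm_eq_1)
    moreover have "v \<bullet> f u = v \<bullet> v + l * (v \<bullet> u)"
      unfolding v_def by (simp add: inner_diff_left inner_diff_right algebra_simps inner_commute)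
    ultimately show ?thesis by (simp add: algebra_simps)
  qed
  hence "v \<bullet> v = 0" by (rule quadratic_nonpos_imp_linear_coeff_zero)
  hence "v = 0" by simp
  thus ?thesis using u unfolding v_def l_def by auto
qed

definition orthonormal_basis :: "'a::euclidean_space set \<Rightarrow> bool" where
  "orthonormal_basis B \<longleftrightarrow> finite B \<and> (\<forall>b\<in>B. norm b = 1) \<and> pairwise orthogonal B \<and> span B = UNIV"

lemma self_adjoint_orthogonal_complement_invariant:
  fixes f :: "'a::real_inner \<Rightarrow> 'a"
  assumes adj: "\<And>x y. x \<bullet> f y = f x \<bullet> y" and u: "f u = \<mu> *\<^sub>R u" and S: "f ` S \<subseteq> S"
  shows "f ` (S \<inter> {y. orthogonal u y}) \<subseteq> S \<inter> {y. orthogonal u y}"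
  using S by (auto simp: orthogonal_def adj[of u] u)

lemma subspace_subset_span_insert_orthogonal:
  fixes u :: "'a::real_inner"
  assumes S: "subspace S" "u \<in> S" and u: "norm u = 1"
    and B: "S \<inter> {y. orthogonal u y} \<subseteq> span B"
  shows "S \<subseteq> span (insert u B)"
proof
  fix y assume "y \<in> S"
  hence "y - (u \<bullet> y) *\<^sub>R u \<in> S \<inter> {y. orthogonal u y}"
    using S u by (auto simp: orthogonal_def subspace_diff subspace_scale inner_diff_right norm_eq_1)
  hence "y - (u \<bullet> y) *\<^sub>R u \<in> span (insert u B)" using B span_mono[of B "insert u B"] by auto
  moreover have "(u \<bullet> y) *\<^sub>R u \<in> span (insert u B)" by (simp add: span_base span_scale)
  ultimately show "y \<in> span (insert u B)" using span_add by fastforce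
qed

lemma self_adjoint_eigenbasis_of_subspace:
  fixes f :: "'a::euclidean_space \<Rightarrow> 'a"
  assumes lin: "linear f" and adj: "\<And>x y. x \<bullet> f y = f x \<bullet> y"
  shows "subspace S \<Longrightarrow> f ` S \<subseteq> S \<Longrightarrow>
    \<exists>B. B \<subseteq> S \<and> finite B \<and> (\<forall>b\<in>B. norm b = 1) \<and> pairwise orthogonal B \<and> S \<subseteq> span B
       \<and> (\<forall>b\<in>B. f b = (b \<bullet> f b) *\<^sub>R b)"
proof (induction "dim S" arbitrary: S rule: less_induct)
  case less
  show ?case
  proof (cases "S \<subseteq> {0}")
    case True
    then show ?thesis by (intro exI[of _ "{}"]) auto
  next
    case False
    then obtain x where "x \<in> S" "x \<noteq> 0" by blast
    then obtain u where u: "u \<in> S" "norm u = 1" "f u = (u \<bullet> f u) *\<^sub>R u"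
      using self_adjoint_unit_eigenvector_in_subspace[OF lin adj less.prems] by blast
    define S' where "S' = S \<inter> {y. orthogonal u y}"
    have sub': "subspace S'" unfolding S'_def
      using subspace_inter[OF less.prems(1) subspace_orthogonal_to_vector[of u]] by simp
    have inv': "f ` S' \<subseteq> S'"
      unfolding S'_def by (rule self_adjoint_orthogonal_complement_invariant[OF adj u(3) less.prems(2)])
    have "u \<notin> S'" using u(2) unfolding S'_def orthogonal_def by (auto simp: norm_eq_1)
    hence "S' \<subset> S" using u(1) unfolding S'_def by auto
    hence "dim S' < dim S"
      using dim_psubset[of S' S] span_eq_iff[THEN iffD2, OF sub'] span_eq_iff[THEN iffD2, OF less.prems(1)]
      by simp
    from less.hyps[OF this sub' inv'] obtain B' where B': "B' \<subseteq> S'" "finite B'" "\<forall>b\<in>B'. norm b = 1"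
      "pairwise orthogonal B'" "S' \<subseteq> span B'" "\<forall>b\<in>B'. f b = (b \<bullet> f b) *\<^sub>R b"
      by blast
    show ?thesis
    proof (intro exI[of _ "insert u B'"] conjI)
      show "insert u B' \<subseteq> S" "finite (insert u B')" "\<forall>b\<in>insert u B'. norm b = 1"
        using B'(1-3) u(1,2) unfolding S'_def by auto
      show "\<forall>b\<in>insert u B'. f b = (b \<bullet> f b) *\<^sub>R b"
        using B'(6) u(3) by blast
      show "pairwise orthogonal (insert u B')"
        using B'(1,4) unfolding S'_def pairwise_insert by (auto simp: orthogonal_commute)
      show "S \<subseteq> span (insert u B')"
        using subspace_subset_span_insert_orthogonal less.prems(1) u(1,2) B'(5) unfolding S'_def by blast
    qed
  qed
qed

theorem self_adjoint_eigenbasis: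
  fixes f :: "'a::euclidean_space \<Rightarrow> 'a"
  assumes "linear f" and "\<And>x y. x \<bullet> f y = f x \<bullet> y"
  obtains B lam where "orthonormal_basis B" and "\<And>b. b \<in> B \<Longrightarrow> f b = lam b *\<^sub>R b"
proof -
  obtain B where B: "finite B" "\<forall>b\<in>B. norm b = 1" "pairwise orthogonal B" "UNIV \<subseteq> span B"
    and e: "\<forall>b\<in>B. f b = (b \<bullet> f b) *\<^sub>R b"
    using self_adjoint_eigenbasis_of_subspace[OF assms subspace_UNIV subset_UNIV] by blast
  have "orthonormal_basis B" using B unfolding orthonormal_basis_def by (simp add: top_le)
  with e show thesis using that[of B "\<lambda>b. b \<bullet> f b"] by blast
qed

lemma orthonormal_basis_inner:
  assumes "orthonormal_basis B" "b \<in> B" "c \<in> B"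
  shows "b \<bullet> c = (if b = c then 1 else 0)"
  using assms unfolding orthonormal_basis_def pairwise_def orthogonal_def by (auto simp: norm_eq_1)

lemma orthonormal_basis_expansion:
  assumes B: "orthonormal_basis B"
  shows "x = (\<Sum>b\<in>B. (b \<bullet> x) *\<^sub>R b)"
proof -
  have fin: "finite B" and "x \<in> span B" using B by (auto simp: orthonormal_basis_def)
  then obtain c where c: "x = (\<Sum>b\<in>B. c b *\<^sub>R b)" using span_finite[OF fin] by auto
  have "b' \<bullet> x = c b'" if "b' \<in> B" for b'
  proof -
    have "b' \<bullet> x = (\<Sum>b\<in>B. if b = b' then c b else 0)"
      unfolding c inner_sum_right
      by (rule sum.cong) (use orthonormal_basis_inner[OF B that] in auto)
    also have "\<dots> = c b'" using fin that by simp
    finally show ?thesis .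
  qed
  thus ?thesis using c by (auto intro: sum.cong)
qed

lemma orthonormal_basis_parseval:
  assumes "orthonormal_basis B"
  shows "x \<bullet> y = (\<Sum>b\<in>B. (b \<bullet> x) * (b \<bullet> y))"
  by (subst orthonormal_basis_expansion[OF assms, of y])
    (simp add: inner_sum_right inner_commute mult.commute)

lemma orthonormal_basis_independent:
  assumes "orthonormal_basis B" "P \<subseteq> B"
  shows "independent P"
proof (rule pairwise_orthogonal_independent)
  show "pairwise orthogonal P" using assms pairwise_subset unfolding orthonormal_basis_def by blast
  show "0 \<notin> P" using assms unfolding orthonormal_basis_def by fastforce
qed

lemma eigenbasis_apply:
  fixes f :: "'a::euclidean_space \<Rightarrow> 'a"
  assumes lin: "linear f" and B: "orthonormal_basis B" and e: "\<And>b. b \<in> B \<Longrightarrow> f b = lam b *\<^sub>R b"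
  shows "f x = (\<Sum>b\<in>B. (lam b * (b \<bullet> x)) *\<^sub>R b)"
proof -
  have "f x = (\<Sum>b\<in>B. (b \<bullet> x) *\<^sub>R f b)"
    by (subst orthonormal_basis_expansion[OF B, of x]) (simp add: linear_sum[OF lin] linear_scale[OF lin])
  also have "\<dots> = (\<Sum>b\<in>B. (lam b * (b \<bullet> x)) *\<^sub>R b)"
    by (rule sum.cong) (simp_all add: e mult.commute)
  finally show ?thesis .
qed

lemma eigenbasis_quadratic_form:
  fixes f :: "'a::euclidean_space \<Rightarrow> 'a"
  assumes "linear f" "orthonormal_basis B" "\<And>b. b \<in> B \<Longrightarrow> f b = lam b *\<^sub>R b"
  shows "x \<bullet> f x = (\<Sum>b\<in>B. lam b * (b \<bullet> x)^2)"
  by (simp add: eigenbasis_apply[OF assms] inner_sum_right power2_eq_square inner_commute mult.assoc)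

lemma eigenbasis_eigenvalue:
  fixes f :: "'a::euclidean_space \<Rightarrow> 'a"
  assumes "orthonormal_basis B" "\<And>b. b \<in> B \<Longrightarrow> f b = lam b *\<^sub>R b" "b \<in> B"
  shows "lam b = b \<bullet> f b"
  using orthonormal_basis_inner[OF assms(1,3,3)] assms(2)[OF assms(3)] by simp

lemma eigenvalue_bounds:
  fixes f :: "'a::euclidean_space \<Rightarrow> 'a"
  assumes "\<And>x. 0 \<le> x \<bullet> f x \<and> x \<bullet> f x \<le> x \<bullet> x"
    and "orthonormal_basis B" "\<And>b. b \<in> B \<Longrightarrow> f b = lam b *\<^sub>R b" "b \<in> B"
  shows "0 \<le> lam b \<and> lam b \<le> 1"
  using assms(1)[of b] eigenbasis_eigenvalue[OF assms(2-4)] orthonormal_basis_inner[OF assms(2,4,4)]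
  by simp

section \<open>Trace, rank and spectral norm of symmetric matrices\<close>

lemma symmetric_matrix_inner_commute:
  fixes A :: "real^'n^'n"
  assumes "transpose A = A"
  shows "x \<bullet> (A *v y) = (A *v x) \<bullet> y"
  by (metis assms dot_lmul_matrix vector_transpose_matrix)

lemma symmetric_matrix_eigenbasis:
  fixes A :: "real^'n^'n"
  assumes "transpose A = A"
  obtains B lam where "orthonormal_basis B" and "\<And>b. b \<in> B \<Longrightarrow> A *v b = lam b *\<^sub>R b"
  using self_adjoint_eigenbasis[OF matrix_vector_mul_linear symmetric_matrix_inner_commute[OF assms]]
  by blast

lemma trace_eq_sum_orthonormal_basis:
  fixes A :: "real^'n^'n"
  assumes B: "orthonormal_basis B"
  shows "trace A = (\<Sum>b\<in>B. b \<bullet> (A *v b))"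
proof -
  have basis: "(\<Sum>b\<in>B. (b $ i) *\<^sub>R b) = axis i 1" for i
    using orthonormal_basis_expansion[OF B, of "axis i 1"] by (simp add: inner_axis)
  have "(\<Sum>b\<in>B. b \<bullet> (A *v b)) = (\<Sum>i\<in>UNIV. \<Sum>b\<in>B. b $ i * (A *v b) $ i)"
    unfolding inner_vec_def inner_real_def by (rule sum.swap)
  also have "\<dots> = (\<Sum>i\<in>UNIV. (A *v (\<Sum>b\<in>B. (b $ i) *\<^sub>R b)) $ i)"
    by (simp add: linear_sum[OF matrix_vector_mul_linear] linear_scale[OF matrix_vector_mul_linear] sum_component)
  also have "\<dots> = trace A" by (simp add: basis trace_def matrix_vector_mult_basis column_def)
  finally show ?thesis by simp
qed

lemma trace_eq_sum_eigenvalues: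
  fixes A :: "real^'n^'n"
  assumes B: "orthonormal_basis B" and e: "\<And>b. b \<in> B \<Longrightarrow> A *v b = lam b *\<^sub>R b"
  shows "trace A = sum lam B"
  unfolding trace_eq_sum_orthonormal_basis[OF B]
  by (rule sum.cong) (simp_all add: eigenbasis_eigenvalue[OF B e])

lemma rank_eq_card_nonzero_eigenvalues:
  fixes A :: "real^'n^'n"
  assumes B: "orthonormal_basis B" and e: "\<And>b. b \<in> B \<Longrightarrow> A *v b = lam b *\<^sub>R b"
  shows "rank A = card {b\<in>B. lam b \<noteq> 0}"
proof -
  let ?P = "{b\<in>B. lam b \<noteq> 0}"
  have fin: "finite B" using B unfolding orthonormal_basis_def by blast
  have "range ((*v) A) \<subseteq> span ?P"
  proof
    fix y assume "y \<in> range ((*v) A)"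
    then obtain x where "y = A *v x" by blast
    also have "\<dots> = (\<Sum>b\<in>B. (lam b * (b \<bullet> x)) *\<^sub>R b)"
      by (rule eigenbasis_apply[OF matrix_vector_mul_linear B e])
    also have "\<dots> = (\<Sum>b\<in>?P. (lam b * (b \<bullet> x)) *\<^sub>R b)"
      by (rule sum.mono_neutral_right) (use fin in auto)
    also have "\<dots> \<in> span ?P" by (intro span_sum span_scale span_base) auto
    finally show "y \<in> span ?P" .
  qed
  moreover have "span ?P \<subseteq> range ((*v) A)"
  proof (rule span_minimal)
    show "subspace (range ((*v) A))"
      by (rule linear_subspace_image[OF matrix_vector_mul_linear subspace_UNIV])
    show "?P \<subseteq> range ((*v) A)"
    proof
      fix b assume b: "b \<in> ?P"
      hence "A *v ((1 / lam b) *\<^sub>R b) = b" by (simp add: matrix_vector_mult_scaleR e)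
      thus "b \<in> range ((*v) A)" by (metis rangeI)
    qed
  qed
  ultimately have "rank A = dim (span ?P)" by (simp add: rank_dim_range)
  also have "\<dots> = card ?P"
    by (simp add: dim_eq_card_independent orthonormal_basis_independent[OF B])
  finally show ?thesis .
qed

lemma spec_norm_le_one_iff:
  fixes X :: "real^'n^'n"
  shows "spec_norm X \<le> 1 \<longleftrightarrow> (\<forall>x. norm (X *v x) \<le> norm x)"
proof
  assume X: "spec_norm X \<le> 1"
  show "\<forall>x. norm (X *v x) \<le> norm x"
  proof
    fix x
    have "norm (X *v x) \<le> spec_norm X * norm x" unfolding spec_norm_def by (rule onorm) simp
    also have "\<dots> \<le> norm x" using mult_right_mono[OF X, of "norm x"] by simp
    finally show "norm (X *v x) \<le> norm x" .
  qed
next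
  assume "\<forall>x. norm (X *v x) \<le> norm x"
  thus "spec_norm X \<le> 1" unfolding spec_norm_def by (intro onorm_le) simp
qed

lemma symmetric_quadratic_form_le_imp_contraction:
  fixes X :: "real^'n^'n"
  assumes sym: "transpose X = X" and quad: "\<And>x. 0 \<le> x \<bullet> (X *v x) \<and> x \<bullet> (X *v x) \<le> x \<bullet> x"
  shows "norm (X *v x) \<le> norm x"
proof -
  obtain B lam where B: "orthonormal_basis B" and e: "\<And>b. b \<in> B \<Longrightarrow> X *v b = lam b *\<^sub>R b"
    using symmetric_matrix_eigenbasis sym by blast
  have coord: "b \<bullet> (X *v x) = lam b * (b \<bullet> x)" if "b \<in> B" for b
    using symmetric_matrix_inner_commute[OF sym, of b x] e[OF that] by simp
  have "(norm (X *v x))^2 = (\<Sum>b\<in>B. (lam b)^2 * (b \<bullet> x)^2)"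
    unfolding power2_norm_eq_inner orthonormal_basis_parseval[OF B, of "X *v x"]
    by (rule sum.cong) (simp_all add: coord power2_eq_square)
  also have "\<dots> \<le> (\<Sum>b\<in>B. (b \<bullet> x)^2)"
  proof (rule sum_mono)
    fix b assume "b \<in> B"
    hence "(lam b)^2 \<le> 1" using eigenvalue_bounds[OF quad B e] by (simp add: power_le_one)
    thus "(lam b)^2 * (b \<bullet> x)^2 \<le> (b \<bullet> x)^2" by (simp add: mult_left_le_one_le)
  qed
  also have "\<dots> = (norm x)^2"
    unfolding power2_norm_eq_inner orthonormal_basis_parseval[OF B, of x] by (simp add: power2_eq_square)
  finally show ?thesis by (simp add: power2_le_iff_abs_le)
qed

lemma psd_spec_norm_le_one_iff:
  fixes X :: "real^'n^'n"
  shows "psd X \<and> spec_norm X \<le> 1 \<longleftrightarrow>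
    transpose X = X \<and> (\<forall>x. 0 \<le> x \<bullet> (X *v x) \<and> x \<bullet> (X *v x) \<le> x \<bullet> x)"
proof
  assume X: "psd X \<and> spec_norm X \<le> 1"
  have "x \<bullet> (X *v x) \<le> x \<bullet> x" for x
  proof -
    have "x \<bullet> (X *v x) \<le> norm x * norm (X *v x)" by (rule norm_cauchy_schwarz)
    also have "\<dots> \<le> norm x * norm x" using X by (simp add: spec_norm_le_one_iff mult_left_mono)
    also have "\<dots> = x \<bullet> x" by (simp add: power2_norm_eq_inner[symmetric] power2_eq_square)
    finally show ?thesis .
  qed
  then show "transpose X = X \<and> (\<forall>x. 0 \<le> x \<bullet> (X *v x) \<and> x \<bullet> (X *v x) \<le> x \<bullet> x)"
    using X unfolding psd_def by blast
next
  assume X: "transpose X = X \<and> (\<forall>x. 0 \<le> x \<bullet> (X *v x) \<and> x \<bullet> (X *v x) \<le> x \<bullet> x)"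
  then have "norm (X *v x) \<le> norm x" for x by (intro symmetric_quadratic_form_le_imp_contraction) auto
  then show "psd X \<and> spec_norm X \<le> 1" using X unfolding psd_def spec_norm_le_one_iff by blast
qed

lemma trace_le_rank:
  fixes X :: "real^'n^'n"
  assumes "psd X" "spec_norm X \<le> 1"
  shows "trace X \<le> real (rank X)"
proof -
  have X: "transpose X = X" "\<And>x. 0 \<le> x \<bullet> (X *v x) \<and> x \<bullet> (X *v x) \<le> x \<bullet> x"
    using assms psd_spec_norm_le_one_iff by blast+
  obtain B lam where B: "orthonormal_basis B" and e: "\<And>b. b \<in> B \<Longrightarrow> X *v b = lam b *\<^sub>R b"
    using symmetric_matrix_eigenbasis X(1) by blast
  have fin: "finite B" using B unfolding orthonormal_basis_def by blast
  have "trace X = sum lam B" by (rule trace_eq_sum_eigenvalues[OF B e])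
  also have "\<dots> = sum lam {b\<in>B. lam b \<noteq> 0}" by (rule sum.mono_neutral_right) (use fin in auto)
  also have "\<dots> \<le> (\<Sum>b\<in>{b\<in>B. lam b \<noteq> 0}. 1)"
    by (rule sum_mono) (use eigenvalue_bounds[OF X(2) B e] in auto)
  also have "\<dots> = real (rank X)" by (simp add: rank_eq_card_nonzero_eigenvalues[OF B e])
  finally show ?thesis .
qed

section \<open>The trace-bounded positive semidefinite ball\<close>

definition trace_bounded_psd_ball :: "nat \<Rightarrow> (real^'n^'n) set" where
  "trace_bounded_psd_ball k = {X. psd X \<and> trace X \<le> real k \<and> spec_norm X \<le> 1}"

lemma mem_trace_bounded_psd_ball_iff:
  "X \<in> trace_bounded_psd_ball k \<longleftrightarrow>
    transpose X = X \<and> (\<forall>x. 0 \<le> x \<bullet> (X *v x) \<and> x \<bullet> (X *v x) \<le> x \<bullet> x) \<and> trace X \<le> real k"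
  using psd_spec_norm_le_one_iff[of X] unfolding trace_bounded_psd_ball_def by blast

lemma trace_scaleR: "trace (c *\<^sub>R A) = c * trace (A :: real^'n^'n)"
  by (simp add: trace_def sum_distrib_left)

lemma convex_trace_bounded_psd_ball: "convex (trace_bounded_psd_ball k)"
proof (rule convexI)
  fix X Y :: "real^'n^'n" and u v :: real
  assume X: "X \<in> trace_bounded_psd_ball k" and Y: "Y \<in> trace_bounded_psd_ball k"
    and uv: "0 \<le> u" "0 \<le> v" "u + v = 1"
  have quad: "x \<bullet> ((u *\<^sub>R X + v *\<^sub>R Y) *v x) = u * (x \<bullet> (X *v x)) + v * (x \<bullet> (Y *v x))" for x
    by (simp add: matrix_vector_mult_add_rdistrib scaleR_matrix_vector_assoc[symmetric] inner_add_right)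
  show "u *\<^sub>R X + v *\<^sub>R Y \<in> trace_bounded_psd_ball k"
    using X Y uv unfolding mem_trace_bounded_psd_ball_iff quad
    by (auto simp: trace_add trace_scaleR transpose_def vec_eq_iff intro!: convex_bound_le)
qed

lemma closed_trace_bounded_psd_ball: "closed (trace_bounded_psd_ball k)"
proof -
  have "trace_bounded_psd_ball k = (\<Inter>i j. {X::real^'n^'n. X$i$j = X$j$i})
      \<inter> (\<Inter>x. {X. 0 \<le> x \<bullet> (X *v x)}) \<inter> (\<Inter>x. {X. x \<bullet> (X *v x) \<le> x \<bullet> x}) \<inter> {X. trace X \<le> real k}"
    unfolding mem_trace_bounded_psd_ball_iff set_eq_iff by (auto simp: transpose_def vec_eq_iff)
  also have "closed \<dots>"
  proof (intro closed_Int closed_INT ballI)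
    have [continuous_intros]: "continuous_on UNIV (\<lambda>X::real^'n^'n. X *v x)" for x
      unfolding matrix_vector_mult_def by (intro continuous_intros)
    show "closed {X::real^'n^'n. X$i$j = X$j$i}" for i j
      by (rule closed_Collect_eq) (intro continuous_intros)+
    show "closed {X::real^'n^'n. 0 \<le> x \<bullet> (X *v x)}" "closed {X::real^'n^'n. x \<bullet> (X *v x) \<le> x \<bullet> x}" for x
      by (rule closed_Collect_le; intro continuous_intros)+
    show "closed {X::real^'n^'n. trace X \<le> real k}"
      unfolding trace_def by (rule closed_Collect_le) (intro continuous_intros)+
  qed
  finally show ?thesis .
qed

lemma bounded_trace_bounded_psd_ball: "bounded (trace_bounded_psd_ball k :: (real^'n^'n) set)"
proof -
  have "norm X \<le> real CARD('n) * real CARD('n)" if X: "X \<in> trace_bounded_psd_ball k" for X :: "real^'n^'n"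
  proof -
    have entry: "\<bar>X$i$j\<bar> \<le> 1" for i j
      using matrix_component_le_onorm[of X i j] X unfolding trace_bounded_psd_ball_def spec_norm_def by auto
    have "norm X \<le> (\<Sum>i\<in>UNIV. norm (X$i))"
      unfolding norm_vec_def by (rule L2_set_le_sum) simp
    also have "\<dots> \<le> (\<Sum>i\<in>(UNIV::'n set). \<Sum>j\<in>(UNIV::'n set). \<bar>X$i$j\<bar>)"
      by (intro sum_mono norm_le_l1_cart)
    also have "\<dots> \<le> (\<Sum>i\<in>(UNIV::'n set). \<Sum>j\<in>(UNIV::'n set). 1)"
      by (intro sum_mono entry)
    finally show ?thesis by simp
  qed
  thus ?thesis unfolding bounded_iff by blast
qed

lemma compact_trace_bounded_psd_ball: "compact (trace_bounded_psd_ball k)"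
  by (simp add: compact_eq_bounded_closed bounded_trace_bounded_psd_ball closed_trace_bounded_psd_ball)

lemma rank_set_subset_trace_bounded_psd_ball: "rank_set k \<subseteq> trace_bounded_psd_ball k"
  unfolding rank_set_def trace_bounded_psd_ball_def
  using trace_le_rank by (fastforce intro: order_trans)

definition outer_prod :: "real^'n \<Rightarrow> real^'n \<Rightarrow> real^'n^'n" where
  "outer_prod u v = (\<chi> i j. u$i * v$j)"

lemma outer_prod_mult_vector: "outer_prod u v *v x = (v \<bullet> x) *\<^sub>R u"
  by (simp add: outer_prod_def matrix_vector_mult_def vec_eq_iff inner_vec_def sum_distrib_left
      mult.assoc mult.commute mult.left_commute)

lemma trace_outer_prod: "trace (outer_prod u v) = u \<bullet> v"
  by (simp add: outer_prod_def trace_def inner_vec_def)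

lemma perturbed_binary_form_nonneg:
  fixes l1 l2 a c \<alpha> \<beta> d :: real
  assumes "d \<le> l1" "d \<le> l2" "\<bar>\<alpha>\<bar> + \<bar>\<beta>\<bar> \<le> d"
  shows "0 \<le> l1*a^2 + l2*c^2 + \<alpha>*(a^2 - c^2) + 2*\<beta>*a*c"
proof -
  have "- (\<bar>\<beta>\<bar>*(a^2 + c^2)) \<le> 2*\<beta>*a*c"
  proof (cases "\<beta> \<ge> 0")
    case True
    have "0 \<le> \<beta> * (a + c)^2" using True by simp
    thus ?thesis using True by (simp add: power2_eq_square algebra_simps)
  next
    case False
    have "0 \<le> (-\<beta>) * (a - c)^2" using False by (intro mult_nonneg_nonneg) auto
    thus ?thesis using False by (simp add: power2_eq_square algebra_simps)
  qed
  moreover have "0 \<le> (l1 + \<alpha> - \<bar>\<beta>\<bar>) * a^2" "0 \<le> (l2 - \<alpha> - \<bar>\<beta>\<bar>) * c^2"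
    using assms by (intro mult_nonneg_nonneg; auto)+
  ultimately show ?thesis by (simp add: algebra_simps)
qed

lemma quadratic_form_outer_prod_perturbation:
  fixes Z :: "real^'n^'n"
  shows "x \<bullet> ((Z + \<alpha> *\<^sub>R (outer_prod b1 b1 - outer_prod b2 b2) + \<beta> *\<^sub>R (outer_prod b1 b2 + outer_prod b2 b1)) *v x)
    = x \<bullet> (Z *v x) + \<alpha> * ((b1 \<bullet> x)^2 - (b2 \<bullet> x)^2) + 2 * \<beta> * (b1 \<bullet> x) * (b2 \<bullet> x)"
  by (simp add: matrix_vector_mult_add_rdistrib matrix_vector_mult_diff_rdistrib
      scaleR_matrix_vector_assoc[symmetric] outer_prod_mult_vector inner_add_right inner_diff_right
      power2_eq_square inner_commute algebra_simps)

lemma eigenbasis_perturbed_quadratic_form_bounds: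
  fixes Z :: "real^'n^'n"
  assumes B: "orthonormal_basis B" and e: "\<And>b. b \<in> B \<Longrightarrow> Z *v b = lam b *\<^sub>R b"
    and lam: "\<And>b. b \<in> B \<Longrightarrow> 0 \<le> lam b \<and> lam b \<le> 1"
    and b: "b1 \<in> B" "b2 \<in> B" "b1 \<noteq> b2"
    and d: "d \<le> lam b1" "d \<le> lam b2" "lam b1 \<le> 1 - d" "lam b2 \<le> 1 - d"
    and \<alpha>\<beta>: "\<bar>\<alpha>\<bar> + \<bar>\<beta>\<bar> \<le> d"
  defines "M \<equiv> Z + \<alpha> *\<^sub>R (outer_prod b1 b1 - outer_prod b2 b2) + \<beta> *\<^sub>R (outer_prod b1 b2 + outer_prod b2 b1)"
  shows "0 \<le> x \<bullet> (M *v x) \<and> x \<bullet> (M *v x) \<le> x \<bullet> x"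
proof -
  have fin: "finite B" using B unfolding orthonormal_basis_def by blast
  have split: "sum g B = g b1 + g b2 + sum g (B - {b1, b2})" for g :: "real^'n \<Rightarrow> real"
    using sum.subset_diff[of "{b1, b2}" B g] fin b by simp
  define a c where "a = b1 \<bullet> x" and "c = b2 \<bullet> x"
  define R where "R = (\<Sum>b\<in>B - {b1, b2}. lam b * (b \<bullet> x)^2)"
  define N where "N = (\<Sum>b\<in>B - {b1, b2}. (b \<bullet> x)^2)"
  have "x \<bullet> (Z *v x) = (\<Sum>b\<in>B. lam b * (b \<bullet> x)^2)"
    by (rule eigenbasis_quadratic_form[OF matrix_vector_mul_linear B e])
  hence "x \<bullet> (M *v x) = R + (lam b1 * a^2 + lam b2 * c^2 + \<alpha> * (a^2 - c^2) + 2 * \<beta> * a * c)"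
    using split[of "\<lambda>b. lam b * (b \<bullet> x)^2"]
    unfolding M_def quadratic_form_outer_prod_perturbation a_def c_def R_def by simp
  moreover have "x \<bullet> x = N + (a^2 + c^2)"
    using orthonormal_basis_parseval[OF B, of x x] split[of "\<lambda>b. (b \<bullet> x)^2"]
    unfolding a_def c_def N_def by (simp add: power2_eq_square)
  moreover have "0 \<le> R" unfolding R_def using lam by (auto intro!: sum_nonneg)
  moreover have "R \<le> N" unfolding R_def N_def using lam by (auto intro!: sum_mono mult_left_le_one_le)
  moreover have "0 \<le> lam b1 * a^2 + lam b2 * c^2 + \<alpha> * (a^2 - c^2) + 2 * \<beta> * a * c"
    using d(1,2) \<alpha>\<beta> by (rule perturbed_binary_form_nonneg)
  moreover have "0 \<le> (1 - lam b1) * a^2 + (1 - lam b2) * c^2 + (-\<alpha>) * (a^2 - c^2) + 2 * (-\<beta>) * a * c"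
    using d(3,4) \<alpha>\<beta> by (intro perturbed_binary_form_nonneg[of d]) auto
  ultimately show ?thesis by (simp add: algebra_simps)
qed

lemma trace_bounded_psd_ball_perturb:
  fixes Z :: "real^'n^'n"
  assumes Z: "Z \<in> trace_bounded_psd_ball k"
    and B: "orthonormal_basis B" and e: "\<And>b. b \<in> B \<Longrightarrow> Z *v b = lam b *\<^sub>R b"
    and b: "b1 \<in> B" "b2 \<in> B" "b1 \<noteq> b2"
    and d: "d \<le> lam b1" "d \<le> lam b2" "lam b1 \<le> 1 - d" "lam b2 \<le> 1 - d"
    and \<alpha>\<beta>: "\<bar>\<alpha>\<bar> + \<bar>\<beta>\<bar> \<le> d"
  shows "Z + \<alpha> *\<^sub>R (outer_prod b1 b1 - outer_prod b2 b2) + \<beta> *\<^sub>R (outer_prod b1 b2 + outer_prod b2 b1)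
    \<in> trace_bounded_psd_ball k" (is "?M \<in> _")
proof -
  have sym: "transpose Z = Z" and quad: "\<And>x. 0 \<le> x \<bullet> (Z *v x) \<and> x \<bullet> (Z *v x) \<le> x \<bullet> x"
    and tr: "trace Z \<le> real k"
    using Z unfolding mem_trace_bounded_psd_ball_iff by blast+
  have "transpose ?M = ?M"
    using sym by (simp add: transpose_def vec_eq_iff outer_prod_def mult.commute)
  moreover have "trace ?M = trace Z"
    using orthonormal_basis_inner[OF B] b by (simp add: trace_add trace_sub trace_scaleR trace_outer_prod)
  moreover have "0 \<le> x \<bullet> (?M *v x) \<and> x \<bullet> (?M *v x) \<le> x \<bullet> x" for x
    using eigenbasis_perturbed_quadratic_form_bounds[OF B e eigenvalue_bounds[OF quad B e] b d \<alpha>\<beta>] .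
  ultimately show ?thesis using tr unfolding mem_trace_bounded_psd_ball_iff by simp
qed

lemma two_elements_below_one:
  fixes lam :: "'a \<Rightarrow> real"
  assumes fin: "finite P" and lam: "\<And>b. b \<in> P \<Longrightarrow> 0 < lam b \<and> lam b \<le> 1"
    and sum: "sum lam P \<le> real k" and card: "k < card P"
  shows "\<exists>b1\<in>P. \<exists>b2\<in>P. b1 \<noteq> b2 \<and> lam b1 < 1 \<and> lam b2 < 1"
proof (rule ccontr)
  assume none: "\<not> ?thesis"
  obtain f where f: "\<And>b. b \<in> P \<Longrightarrow> b \<noteq> f \<Longrightarrow> lam b = 1"
  proof (cases "\<exists>b\<in>P. lam b < 1")
    case True
    then obtain f where "f \<in> P" "lam f < 1" by blast
    with none lam show ?thesis by (intro that[of f]) force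
  next
    case False
    with lam show ?thesis by (intro that) force
  qed
  have ones: "sum lam (P - {f}) = real (card (P - {f}))"
    using f by simp
  have "real k < sum lam P"
  proof (cases "f \<in> P")
    case True
    have "sum lam P = lam f + sum lam (P - {f})" using True fin by (simp add: sum.remove)
    moreover have "0 < lam f" using True lam by blast
    ultimately show ?thesis using ones True fin card by simp
  next
    case False
    then show ?thesis using ones card by simp
  qed
  with sum show False by simp
qed

lemma trace_bounded_psd_ball_two_fractional_eigenvalues:
  fixes Z :: "real^'n^'n"
  assumes Z: "Z \<in> trace_bounded_psd_ball k" and rk: "k < rank Z"
    and B: "orthonormal_basis B" and e: "\<And>b. b \<in> B \<Longrightarrow> Z *v b = lam b *\<^sub>R b"
  shows "\<exists>b1\<in>B. \<exists>b2\<in>B. b1 \<noteq> b2 \<and> 0 < lam b1 \<and> lam b1 < 1 \<and> 0 < lam b2 \<and> lam b2 < 1"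
proof -
  have quad: "\<And>x. 0 \<le> x \<bullet> (Z *v x) \<and> x \<bullet> (Z *v x) \<le> x \<bullet> x" and tr: "trace Z \<le> real k"
    using Z unfolding mem_trace_bounded_psd_ball_iff by blast+
  have lam: "0 \<le> lam b \<and> lam b \<le> 1" if "b \<in> B" for b
    by (rule eigenvalue_bounds[OF quad B e that])
  have fin: "finite B" using B unfolding orthonormal_basis_def by blast
  let ?P = "{b\<in>B. lam b \<noteq> 0}"
  have "trace Z = sum lam B" by (rule trace_eq_sum_eigenvalues[OF B e])
  also have "\<dots> = sum lam ?P" by (rule sum.mono_neutral_right) (use fin in auto)
  finally have "trace Z = sum lam ?P" .
  moreover have "card ?P = rank Z" by (rule rank_eq_card_nonzero_eigenvalues[OF B e, symmetric])
  ultimately have "\<exists>b1\<in>?P. \<exists>b2\<in>?P. b1 \<noteq> b2 \<and> lam b1 < 1 \<and> lam b2 < 1"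
    using fin tr rk lam by (intro two_elements_below_one) (auto simp: less_le)
  thus ?thesis using lam by (auto simp: less_le)
qed

lemma trace_bounded_psd_ball_two_directions:
  fixes Z :: "real^'n^'n"
  assumes Z: "Z \<in> trace_bounded_psd_ball k" and rk: "k < rank Z"
  obtains D1 D2 where "D1 \<noteq> 0" "\<nexists>c. D2 = c *\<^sub>R D1"
    "Z + D1 \<in> trace_bounded_psd_ball k" "Z - D1 \<in> trace_bounded_psd_ball k"
    "Z + D2 \<in> trace_bounded_psd_ball k" "Z - D2 \<in> trace_bounded_psd_ball k"
proof -
  have "transpose Z = Z" using Z unfolding mem_trace_bounded_psd_ball_iff by blast
  then obtain B lam where B: "orthonormal_basis B" and e: "\<And>b. b \<in> B \<Longrightarrow> Z *v b = lam b *\<^sub>R b"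
    using symmetric_matrix_eigenbasis by blast
  then obtain b1 b2 where b: "b1 \<in> B" "b2 \<in> B" "b1 \<noteq> b2"
    and lam12: "0 < lam b1" "lam b1 < 1" "0 < lam b2" "lam b2 < 1"
    using trace_bounded_psd_ball_two_fractional_eigenvalues[OF Z rk] by blast
  define d where "d = min (min (lam b1) (lam b2)) (min (1 - lam b1) (1 - lam b2))"
  have "0 < d" using lam12 by (simp add: d_def)
  have perturb: "Z + \<alpha> *\<^sub>R (outer_prod b1 b1 - outer_prod b2 b2) + \<beta> *\<^sub>R (outer_prod b1 b2 + outer_prod b2 b1)
      \<in> trace_bounded_psd_ball k" if "\<bar>\<alpha>\<bar> + \<bar>\<beta>\<bar> \<le> d" for \<alpha> \<beta>
    by (rule trace_bounded_psd_ball_perturb[OF Z B e b]) (use that in \<open>auto simp: d_def\<close>)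
  have ip: "b1 \<bullet> b1 = 1" "b2 \<bullet> b2 = 1" "b1 \<bullet> b2 = 0" "b2 \<bullet> b1 = 0"
    using orthonormal_basis_inner[OF B] b by auto
  define D1 where "D1 = d *\<^sub>R (outer_prod b1 b1 - outer_prod b2 b2)"
  define D2 where "D2 = d *\<^sub>R (outer_prod b1 b2 + outer_prod b2 b1)"
  have D1b1: "D1 *v b1 = d *\<^sub>R b1" and D2b1: "D2 *v b1 = d *\<^sub>R b2"
    unfolding D1_def D2_def
    by (simp_all add: scaleR_matrix_vector_assoc[symmetric] matrix_vector_mult_diff_rdistrib
        matrix_vector_mult_add_rdistrib outer_prod_mult_vector ip)
  show thesis
  proof
    show "D1 \<noteq> 0" using D1b1 \<open>0 < d\<close> ip by auto
    show "\<nexists>c. D2 = c *\<^sub>R D1"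
    proof
      assume "\<exists>c. D2 = c *\<^sub>R D1"
      then obtain c where "D2 = c *\<^sub>R D1" by blast
      hence "d *\<^sub>R b2 = (c * d) *\<^sub>R b1"
        using D1b1 D2b1 by (simp add: scaleR_matrix_vector_assoc[symmetric])
      hence "b2 \<bullet> (d *\<^sub>R b2) = b2 \<bullet> ((c * d) *\<^sub>R b1)" by simp
      hence "d = 0" using ip by simp
      thus False using \<open>0 < d\<close> by simp
    qed
    show "Z + D1 \<in> trace_bounded_psd_ball k" "Z - D1 \<in> trace_bounded_psd_ball k"
      "Z + D2 \<in> trace_bounded_psd_ball k" "Z - D2 \<in> trace_bounded_psd_ball k"
      using perturb[of d 0] perturb[of "-d" 0] perturb[of 0 d] perturb[of 0 "-d"] \<open>0 < d\<close>
      unfolding D1_def D2_def by (simp_all add: algebra_simps)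
  qed
qed

section \<open>Faces of dimension at most one\<close>

lemma face_of_contains_reflected_point:
  fixes z :: "'a::real_vector"
  assumes F: "F face_of S" and z: "z \<in> F" and S: "z + d \<in> S" "z - d \<in> S"
  shows "z + d \<in> F"
proof (cases "d = 0")
  case True
  with z show ?thesis by simp
next
  case False
  have "z - d \<noteq> z + d"
  proof
    assume "z - d = z + d"
    hence "2 *\<^sub>R d = 0" by (metis diff_self add_diff_cancel_left' diff_diff_eq2 scaleR_2)
    with False show False by simp
  qed
  hence "midpoint (z - d) (z + d) \<in> open_segment (z - d) (z + d)" by simp
  moreover have "midpoint (z - d) (z + d) = z" by (simp add: midpoint_def scaleR_2[symmetric])
  ultimately show ?thesis using face_ofD[OF F _ S(2) S(1) z] by simp
qed

lemma face_of_aff_dim_le_1_directions_collinear: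
  fixes z :: "'a::euclidean_space"
  assumes F: "F face_of S" "aff_dim F \<le> 1" and z: "z \<in> F"
    and d1: "z + d1 \<in> S" "z - d1 \<in> S" "d1 \<noteq> 0" and d2: "z + d2 \<in> S" "z - d2 \<in> S"
  shows "\<exists>c. d2 = c *\<^sub>R d1"
proof -
  have "{z + d1, z, z + d2} \<subseteq> F"
    using face_of_contains_reflected_point[OF F(1) z] d1 d2 z by blast
  hence "aff_dim {z + d1, z, z + d2} \<le> 1" using aff_dim_subset F(2) by (metis order_trans)
  hence "collinear {z + d1, z, z + d2}" by (simp add: collinear_aff_dim)
  then obtain u where u: "\<And>x y. x \<in> {z + d1, z, z + d2} \<Longrightarrow> y \<in> {z + d1, z, z + d2} \<Longrightarrow> \<exists>c. x - y = c *\<^sub>R u"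
    unfolding collinear_def by blast
  obtain c1 c2 where "d1 = c1 *\<^sub>R u" "d2 = c2 *\<^sub>R u"
    using u[of "z + d1" z] u[of "z + d2" z] by auto
  with d1(3) show ?thesis by (intro exI[of _ "c2 / c1"]) auto
qed

lemma low_dim_face_subset_rank_set:
  assumes F: "F face_of trace_bounded_psd_ball k" "aff_dim F \<le> 1"
  shows "F \<subseteq> rank_set k"
proof
  fix Z assume "Z \<in> F"
  hence Z: "Z \<in> trace_bounded_psd_ball k" using face_of_imp_subset[OF F(1)] by blast
  have "rank Z \<le> k"
  proof (rule ccontr)
    assume "\<not> rank Z \<le> k"
    then obtain D1 D2 where "D1 \<noteq> 0" "\<nexists>c. D2 = c *\<^sub>R D1"
      "Z + D1 \<in> trace_bounded_psd_ball k" "Z - D1 \<in> trace_bounded_psd_ball k"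
      "Z + D2 \<in> trace_bounded_psd_ball k" "Z - D2 \<in> trace_bounded_psd_ball k"
      using trace_bounded_psd_ball_two_directions[OF Z] by (metis not_le)
    with face_of_aff_dim_le_1_directions_collinear[OF F \<open>Z \<in> F\<close>] show False by blast
  qed
  with Z show "Z \<in> rank_set k" unfolding trace_bounded_psd_ball_def rank_set_def by simp
qed

theorem lemma4:
  fixes k :: nat
  assumes "0 < k" and "k \<le> CARD('n)"
  shows "closure (convex hull (rank_set k :: (real^'n^'n) set)) = convex hull (rank_set k)
       \<and> convex hull (rank_set k :: (real^'n^'n) set)
           = {X. psd X \<and> trace X \<le> real k \<and> spec_norm X \<le> 1}
       \<and> (\<forall>F. F face_of closure (convex hull (rank_set k :: (real^'n^'n) set))
              \<and> aff_dim F \<le> 1 \<longrightarrow> F \<subseteq> rank_set k)"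
proof -
  have extreme: "{X. X extreme_point_of trace_bounded_psd_ball k} \<subseteq> (rank_set k :: (real^'n^'n) set)"
  proof
    fix X :: "real^'n^'n"
    assume "X \<in> {X. X extreme_point_of trace_bounded_psd_ball k}"
    hence "{X} face_of trace_bounded_psd_ball k" by (simp add: face_of_singleton)
    thus "X \<in> rank_set k" using low_dim_face_subset_rank_set[of "{X}"] by simp
  qed
  have hull: "convex hull rank_set k = (trace_bounded_psd_ball k :: (real^'n^'n) set)" (is "?H = ?C")
  proof
    show "?H \<subseteq> ?C"
      using rank_set_subset_trace_bounded_psd_ball convex_trace_bounded_psd_ball by (rule hull_minimal)
    have "?C = convex hull {X. X extreme_point_of ?C}"
      by (rule Krein_Milman_Minkowski[OF compact_trace_bounded_psd_ball convex_trace_bounded_psd_ball])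
    also have "\<dots> \<subseteq> ?H" by (rule hull_mono[OF extreme])
    finally show "?C \<subseteq> ?H" .
  qed
  have closure_hull: "closure (convex hull rank_set k) = (convex hull rank_set k :: (real^'n^'n) set)"
    by (simp add: hull closed_trace_bounded_psd_ball)
  show ?thesis
  proof (intro conjI allI impI)
    show "closure (convex hull rank_set k) = (convex hull rank_set k :: (real^'n^'n) set)"
      by (rule closure_hull)
    show "convex hull (rank_set k :: (real^'n^'n) set) = {X. psd X \<and> trace X \<le> real k \<and> spec_norm X \<le> 1}"
      unfolding hull trace_bounded_psd_ball_def ..
    fix F :: "(real^'n^'n) set"
    assume "F face_of closure (convex hull rank_set k) \<and> aff_dim F \<le> 1"
    then show "F \<subseteq> rank_set k"
      unfolding hull closure_closed[OF closed_trace_bounded_psd_ball]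
      using low_dim_face_subset_rank_set by blast
  qed
qed

end
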